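(* For every precise separable two-sorted ultrametric space $X$ there is a uniformly continuous dc-embedding $e\colon X\to\overline{\mathbb U}$.
   Context: A two-sorted ultrametric space is $(X,d_X,D_X)$ with $D_X$ a linear order with least element $0$, $d_X\colon X\times X\to D_X$ symmetric, $d_X(x,y)=0\iff x=y$, $d_X(x,z)\le\max\{d_X(x,y),d_X(y,z)\}$; precise if $d_X$ is onto $D_X$. A dc-embedding is an injection on points with an order embedding $D_f$ of distance sets fixing $0$ such that $d(f(x),f(x'))=D_f(d(x,x'))$. The topology and uniformity of $X$ are generated by the open balls $B_r(a)=\{x:d(x,a)<r\}$, $r\in D_X\setminus\{0\}$; separable means having a countable dense subset. $\mathbb U$ is the countable rational Urysohn ultrametric space viewed as a two-sorted space with distance set $\mathbb Q_{\ge0}$, and $\overline{\mathbb U}$ is its Cauchy completion: the Cauchy complete two-sorted ultrametric space with distance set $\mathbb Q_{\ge0}$ containing $\mathbb U$ as a dense isometric subspace (Cauchy complete: every chain of balls containing, for every $r\in D\setminus\{0\}$, a member contained in some ball of radius $r$ has nonempty intersection). *)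

theory Defs
  imports Main "HOL-Library.Countable_Set"
begin

text \<open>A two-sorted ultrametric space is given by a point set X, a distance set D
  (a subset of a linearly ordered type) with least element z (the distance 0),
  and a distance function d.\<close>

definition ultrametric2 :: "'a set \<Rightarrow> 'd::linorder set \<Rightarrow> 'd \<Rightarrow> ('a \<Rightarrow> 'a \<Rightarrow> 'd) \<Rightarrow> bool" where
  "ultrametric2 X D z d \<longleftrightarrow>
     z \<in> D \<and> (\<forall>r\<in>D. z \<le> r) \<and>
     (\<forall>x\<in>X. \<forall>y\<in>X. d x y \<in> D \<and> d x y = d y x \<and> (d x y = z \<longleftrightarrow> x = y)) \<and>
     (\<forall>x\<in>X. \<forall>y\<in>X. \<forall>w\<in>X. d x w \<le> max (d x y) (d y w))"

definition precise2 :: "'a set \<Rightarrow> 'd set \<Rightarrow> ('a \<Rightarrow> 'a \<Rightarrow> 'd) \<Rightarrow> bool" where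
  "precise2 X D d \<longleftrightarrow> (\<forall>r\<in>D. \<exists>x\<in>X. \<exists>y\<in>X. d x y = r)"

definition ball2 :: "'a set \<Rightarrow> ('a \<Rightarrow> 'a \<Rightarrow> 'd::linorder) \<Rightarrow> 'a \<Rightarrow> 'd \<Rightarrow> 'a set" where
  "ball2 X d a r = {x \<in> X. d x a < r}"

definition balls2 :: "'a set \<Rightarrow> 'd::linorder set \<Rightarrow> 'd \<Rightarrow> ('a \<Rightarrow> 'a \<Rightarrow> 'd) \<Rightarrow> 'a set set" where
  "balls2 X D z d = {ball2 X d a r | a r. a \<in> X \<and> r \<in> D \<and> r \<noteq> z}"

text \<open>C is dense in the topology generated by the open balls: every nonempty
  finite intersection of open balls (basic open set) meets C.\<close>
definition dense2 :: "'a set \<Rightarrow> 'd::linorder set \<Rightarrow> 'd \<Rightarrow> ('a \<Rightarrow> 'a \<Rightarrow> 'd) \<Rightarrow> 'a set \<Rightarrow> bool" where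
  "dense2 X D z d C \<longleftrightarrow> C \<subseteq> X \<and>
     (\<forall>F. finite F \<and> F \<subseteq> balls2 X D z d \<and> X \<inter> \<Inter>F \<noteq> {} \<longrightarrow> C \<inter> \<Inter>F \<noteq> {})"

definition separable2 :: "'a set \<Rightarrow> 'd::linorder set \<Rightarrow> 'd \<Rightarrow> ('a \<Rightarrow> 'a \<Rightarrow> 'd) \<Rightarrow> bool" where
  "separable2 X D z d \<longleftrightarrow> (\<exists>C. countable C \<and> dense2 X D z d C)"

definition cauchy_complete2 :: "'a set \<Rightarrow> 'd::linorder set \<Rightarrow> 'd \<Rightarrow> ('a \<Rightarrow> 'a \<Rightarrow> 'd) \<Rightarrow> bool" where
  "cauchy_complete2 X D z d \<longleftrightarrow>
     (\<forall>\<B>. \<B> \<subseteq> balls2 X D z d \<and> (\<forall>A\<in>\<B>. \<forall>B\<in>\<B>. A \<subseteq> B \<or> B \<subseteq> A) \<and>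
          (\<forall>r\<in>D - {z}. \<exists>B\<in>\<B>. \<exists>a\<in>X. B \<subseteq> ball2 X d a r)
        \<longrightarrow> X \<inter> \<Inter>\<B> \<noteq> {})"

text \<open>Uniform continuity w.r.t. the uniformities generated by the entourages
  {(x,y). d x y < r}, r a nonzero distance: the preimage of every basic
  entourage of the target (a finite intersection of generators) contains a
  basic entourage of the source.\<close>
definition unif_cont2 ::
  "'a set \<Rightarrow> 'd::linorder set \<Rightarrow> 'd \<Rightarrow> ('a \<Rightarrow> 'a \<Rightarrow> 'd) \<Rightarrow>
   'b set \<Rightarrow> 'e::linorder set \<Rightarrow> 'e \<Rightarrow> ('b \<Rightarrow> 'b \<Rightarrow> 'e) \<Rightarrow> ('a \<Rightarrow> 'b) \<Rightarrow> bool" where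
  "unif_cont2 X D z d Y E w dY f \<longleftrightarrow>
     (\<forall>G. finite G \<and> G \<subseteq> E - {w} \<longrightarrow>
        (\<exists>F. finite F \<and> F \<subseteq> D - {z} \<and>
           (\<forall>x\<in>X. \<forall>y\<in>X. (\<forall>r\<in>F. d x y < r) \<longrightarrow> (\<forall>s\<in>G. dY (f x) (f y) < s))))"

definition dc_embedding ::
  "'a set \<Rightarrow> 'd::linorder set \<Rightarrow> 'd \<Rightarrow> ('a \<Rightarrow> 'a \<Rightarrow> 'd) \<Rightarrow>
   'b set \<Rightarrow> 'e::linorder set \<Rightarrow> 'e \<Rightarrow> ('b \<Rightarrow> 'b \<Rightarrow> 'e) \<Rightarrow> ('a \<Rightarrow> 'b) \<Rightarrow> bool" where
  "dc_embedding X D z d Y E w dY f \<longleftrightarrow>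
     inj_on f X \<and> f ` X \<subseteq> Y \<and>
     (\<exists>Df. Df ` D \<subseteq> E \<and> Df z = w \<and>
        (\<forall>r\<in>D. \<forall>s\<in>D. r \<le> s \<longleftrightarrow> Df r \<le> Df s) \<and>
        (\<forall>x\<in>X. \<forall>y\<in>X. dY (f x) (f y) = Df (d x y)))"

abbreviation Qnn :: "rat set" where "Qnn \<equiv> {q. 0 \<le> q}"

text \<open>The countable rational Urysohn ultrametric space (Fraisse limit of the finite
  ultrametric spaces with distances in Q>=0), characterised by the one-point
  extension property.\<close>
definition rat_urysohn_ultrametric :: "'u set \<Rightarrow> ('u \<Rightarrow> 'u \<Rightarrow> rat) \<Rightarrow> bool" where
  "rat_urysohn_ultrametric U dU \<longleftrightarrow>
     ultrametric2 U Qnn 0 dU \<and> countable U \<and>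
     (\<forall>A f. finite A \<and> A \<subseteq> U \<and> (\<forall>a\<in>A. 0 < f a) \<and>
        (\<forall>a\<in>A. \<forall>b\<in>A. dU a b \<le> max (f a) (f b) \<and> f a \<le> max (dU a b) (f b))
        \<longrightarrow> (\<exists>u\<in>U. \<forall>a\<in>A. dU u a = f a))"

definition urysohn_completion ::
  "'v set \<Rightarrow> ('v \<Rightarrow> 'v \<Rightarrow> rat) \<Rightarrow> 'u set \<Rightarrow> ('u \<Rightarrow> 'u \<Rightarrow> rat) \<Rightarrow> ('u \<Rightarrow> 'v) \<Rightarrow> bool" where
  "urysohn_completion V dV U dU i \<longleftrightarrow>
     rat_urysohn_ultrametric U dU \<and>
     ultrametric2 V Qnn 0 dV \<and> cauchy_complete2 V Qnn 0 dV \<and>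
     i ` U \<subseteq> V \<and> (\<forall>x\<in>U. \<forall>y\<in>U. dV (i x) (i y) = dU x y) \<and>
     dense2 V Qnn 0 dV (i ` U)"

end

(* The distance set D of X is countable: by precision and density, every nonzero distance is
   already realised between two points of a countable dense set C. Giving the n-th element of D
   the weight 2^-n, a rational chosen between the total weight of the distances below r and the
   total weight of those up to r defines an order embedding phi of D into Q>=0 with phi 0 = 0 that
   is continuous at 0. Then phi o d is a rational ultrametric on X. By the one-point extension
   property C embeds isometrically into the Urysohn space, and by Cauchy completeness this
   embedding extends to X: the image of x is a common point of the balls around the images of
   points c of C whose radius exceeds the distance from c to x. The resulting map transports
   distances through phi, and continuity of phi at 0 makes it uniformly continuous. *)

theory Submission
  imports Defs Complex_Main
begin

lemma ultrametric2_dist_mem: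
  assumes "ultrametric2 X D z d" "x \<in> X" "y \<in> X"
  shows "d x y \<in> D"
  using assms unfolding ultrametric2_def by blast

lemma ultrametric2_sym:
  assumes "ultrametric2 X D z d" "x \<in> X" "y \<in> X"
  shows "d x y = d y x"
  using assms unfolding ultrametric2_def by blast

lemma ultrametric2_eq_zero_iff:
  assumes "ultrametric2 X D z d" "x \<in> X" "y \<in> X"
  shows "d x y = z \<longleftrightarrow> x = y"
  using assms unfolding ultrametric2_def by blast

lemma ultrametric2_self:
  assumes "ultrametric2 X D z d" "x \<in> X"
  shows "d x x = z"
  using ultrametric2_eq_zero_iff[OF assms assms(2)] by simp

lemma ultrametric2_triangle:
  assumes "ultrametric2 X D z d" "x \<in> X" "y \<in> X" "w \<in> X"
  shows "d x w \<le> max (d x y) (d y w)"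
  using assms unfolding ultrametric2_def by blast

lemma ultrametric2_bottom:
  assumes "ultrametric2 X D z d"
  shows "z \<in> D" and "r \<in> D \<Longrightarrow> z \<le> r"
  using assms unfolding ultrametric2_def by blast+

lemma ultrametric2_subset:
  "ultrametric2 X D z d \<Longrightarrow> C \<subseteq> X \<Longrightarrow> ultrametric2 C D z d"
  unfolding ultrametric2_def by blast

lemma ultrametric2_dist_eq_of_close:
  assumes um: "ultrametric2 X D z d" and X: "x \<in> X" "y \<in> X" "x' \<in> X" "y' \<in> X"
    and close: "d x x' < d x y" "d y y' < d x y"
  shows "d x' y' = d x y"
proof (rule antisym)
  have "d x y' \<le> max (d x y) (d y y')"
    using ultrametric2_triangle[OF um] X by blast
  then have "d x y' \<le> d x y"
    using close(2) by (simp add: le_max_iff_disj)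
  moreover have "d x' y' \<le> max (d x' x) (d x y')"
    using ultrametric2_triangle[OF um] X by blast
  ultimately show "d x' y' \<le> d x y"
    using close(1) ultrametric2_sym[OF um X(1,3)] by (metis le_max_iff_disj order.trans less_imp_le)
  have "d x y \<le> max (d x x') (d x' y)"
    using ultrametric2_triangle[OF um] X by blast
  then have "d x y \<le> d x' y"
    using close(1) by (metis le_max_iff_disj not_le)
  moreover have "d x' y \<le> max (d x' y') (d y' y)"
    using ultrametric2_triangle[OF um] X by blast
  ultimately show "d x y \<le> d x' y'"
    using close(2) ultrametric2_sym[OF um X(2,4)] by (metis le_max_iff_disj order.trans not_le)
qed

lemma ultrametric2_ball_subset:
  assumes um: "ultrametric2 X D z d" and "a \<in> X" "b \<in> X" "d a b < t" "s \<le> t"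
  shows "ball2 X d a s \<subseteq> ball2 X d b t"
proof
  fix y assume "y \<in> ball2 X d a s"
  then have "y \<in> X" "d y a < s" unfolding ball2_def by auto
  moreover have "d y b \<le> max (d y a) (d a b)"
    using ultrametric2_triangle[OF um] \<open>y \<in> X\<close> assms(2,3) by blast
  ultimately show "y \<in> ball2 X d b t"
    using assms(4,5) unfolding ball2_def by (auto simp: le_max_iff_disj; order)
qed

lemma ultrametric2_extension_condition:
  assumes um: "ultrametric2 X D z d" and "x \<in> X" "a \<in> X" "b \<in> X"
  shows "d a b \<le> max (d x a) (d x b) \<and> d x a \<le> max (d a b) (d x b)"
proof -
  have "d a b \<le> max (d a x) (d x b)" "d x a \<le> max (d x b) (d b a)"
    using ultrametric2_triangle[OF um] assms(2-4) by blast+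
  moreover have "d a x = d x a" "d b a = d a b"
    using ultrametric2_sym[OF um] assms(2-4) by blast+
  ultimately show ?thesis
    by (simp add: max.commute)
qed

lemma dense2_meets_balls:
  assumes um: "ultrametric2 X D z d" and dense: "dense2 X D z d C"
    and "x \<in> X" "finite F" "F \<subseteq> D - {z}"
  obtains c where "c \<in> C" "\<forall>t\<in>F. d c x < t"
proof -
  let ?B = "(\<lambda>t. ball2 X d x t) ` F"
  have "?B \<subseteq> balls2 X D z d"
    using assms(3,5) unfolding balls2_def by blast
  moreover have "x \<in> X \<inter> \<Inter>?B"
    using assms(3,5) ultrametric2_self[OF um] ultrametric2_bottom[OF um]
    by (auto simp: ball2_def order.strict_iff_order)
  ultimately have "C \<inter> \<Inter>?B \<noteq> {}"
    using dense assms(4) unfolding dense2_def by blast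
  then show thesis
    using that unfolding ball2_def by blast
qed

lemma precise2_countable_dist_set:
  assumes um: "ultrametric2 X D z d" and "precise2 X D d" "dense2 X D z d C" "countable C"
  shows "countable D"
proof -
  have "D - {z} \<subseteq> (\<lambda>(c, c'). d c c') ` (C \<times> C)"
  proof
    fix r assume r: "r \<in> D - {z}"
    then obtain x y where xy: "x \<in> X" "y \<in> X" "d x y = r"
      using assms(2) unfolding precise2_def by blast
    obtain c where c: "c \<in> C" "d c x < r"
      using dense2_meets_balls[OF um assms(3) xy(1), of "{r}"] r by blast
    obtain c' where c': "c' \<in> C" "d c' y < r"
      using dense2_meets_balls[OF um assms(3) xy(2), of "{r}"] r by blast
    have "C \<subseteq> X"
      using assms(3) unfolding dense2_def by blast
    then have "d x c < d x y" "d y c' < d x y"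
      using c c' xy ultrametric2_sym[OF um] by auto
    then have "d c c' = r"
      using ultrametric2_dist_eq_of_close[OF um xy(1,2)] c c' xy(3) \<open>C \<subseteq> X\<close> by blast
    then show "r \<in> (\<lambda>(c, c'). d c c') ` (C \<times> C)"
      using \<open>c \<in> C\<close> \<open>c' \<in> C\<close> by force
  qed
  then have "D \<subseteq> insert z ((\<lambda>(c, c'). d c c') ` (C \<times> C))"
    by blast
  then show ?thesis
    using assms(4) by (meson countable_SIGMA countable_image countable_insert countable_subset)
qed

definition half_power_sum :: "nat set \<Rightarrow> real" where
  "half_power_sum S = (\<Sum>n. if n \<in> S then (1/2)^n else 0)"

lemma summable_half_power_sum: "summable (\<lambda>n. if n \<in> S then (1/2::real)^n else 0)"
  by (rule summable_comparison_test[of _ "\<lambda>n. (1/2::real)^n"]) auto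

lemma half_power_sum_nonneg: "0 \<le> half_power_sum S"
  unfolding half_power_sum_def by (rule suminf_nonneg[OF summable_half_power_sum]) simp

lemma half_power_sum_mono: "S \<subseteq> T \<Longrightarrow> half_power_sum S \<le> half_power_sum T"
  unfolding half_power_sum_def
  by (rule suminf_le[OF _ summable_half_power_sum summable_half_power_sum]) auto

lemma half_power_sum_insert:
  assumes "m \<notin> S"
  shows "half_power_sum (insert m S) = half_power_sum S + (1/2)^m"
proof -
  have "(\<lambda>n. if n \<in> insert m S then (1/2::real)^n else 0) =
        (\<lambda>n. (if n \<in> S then (1/2)^n else 0) + (if n = m then (1/2)^n else 0))"
    using assms by auto
  moreover have "\<dots> sums (half_power_sum S + (1/2)^m)"
    unfolding half_power_sum_def by (rule sums_add[OF summable_sums[OF summable_half_power_sum] sums_single])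
  ultimately show ?thesis
    unfolding half_power_sum_def by (simp add: sums_iff)
qed

lemma half_power_sum_le_power:
  assumes "S \<subseteq> {N<..}"
  shows "half_power_sum S \<le> (1/2)^N"
proof -
  let ?a = "\<lambda>n. if n \<in> S then (1/2::real)^n else 0"
  have "half_power_sum S = (\<Sum>n. ?a (n + Suc N)) + (\<Sum>n<Suc N. ?a n)"
    unfolding half_power_sum_def by (rule suminf_split_initial_segment[OF summable_half_power_sum])
  also have "(\<Sum>n<Suc N. ?a n) = 0"
    using assms by (intro sum.neutral) auto
  also have "(\<Sum>n. ?a (n + Suc N)) \<le> (\<Sum>n. (1/2)^Suc N * (1/2)^n)"
  proof (rule suminf_le)
    show "summable (\<lambda>n. ?a (n + Suc N))"
      by (subst summable_iff_shift) (rule summable_half_power_sum)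
    show "summable (\<lambda>n. (1/2)^Suc N * (1/2::real)^n)"
      by (intro summable_mult summable_geometric) simp
    show "\<And>n. ?a (n + Suc N) \<le> (1/2)^Suc N * (1/2)^n"
      by (simp add: power_add mult.commute)
  qed
  also have "(\<Sum>n. (1/2)^Suc N * (1/2::real)^n) = (1/2)^N"
    by (subst suminf_mult) (auto simp: suminf_geometric)
  finally show ?thesis
    by simp
qed

lemma countable_linorder_gaps:
  fixes E :: "'d::linorder set"
  assumes "countable E"
  obtains lower upper :: "'d \<Rightarrow> real"
  where "\<forall>r. 0 \<le> lower r" "\<forall>r\<in>E. lower r < upper r" "\<forall>r s. r < s \<longrightarrow> upper r \<le> lower s"
    "\<forall>\<epsilon>>0. \<exists>F. finite F \<and> F \<subseteq> E \<and> (\<forall>r\<in>E. (\<forall>t\<in>F. r < t) \<longrightarrow> upper r < \<epsilon>)"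
proof -
  define idx where "idx = to_nat_on E"
  have inj: "inj_on idx E"
    unfolding idx_def using \<open>countable E\<close> by (rule inj_on_to_nat_on)
  define lower where "lower r = half_power_sum (idx ` {t\<in>E. t < r})" for r
  define upper where "upper r = half_power_sum (idx ` {t\<in>E. t \<le> r})" for r
  have "lower r < upper r" if "r \<in> E" for r
  proof -
    have "idx ` {t\<in>E. t \<le> r} = insert (idx r) (idx ` {t\<in>E. t < r})"
      using that by (auto simp: order.order_iff_strict)
    moreover have "idx r \<notin> idx ` {t\<in>E. t < r}"
      using that inj by (auto simp: inj_on_eq_iff)
    ultimately show ?thesis
      unfolding lower_def upper_def by (simp add: half_power_sum_insert)
  qed
  moreover have "upper r \<le> lower s" if "r < s" for r s
    unfolding lower_def upper_def using that by (intro half_power_sum_mono) auto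
  moreover have "\<exists>F. finite F \<and> F \<subseteq> E \<and> (\<forall>r\<in>E. (\<forall>t\<in>F. r < t) \<longrightarrow> upper r < \<epsilon>)"
    if "0 < \<epsilon>" for \<epsilon> :: real
  proof -
    obtain N where N: "(1/2::real)^N < \<epsilon>"
      using real_arch_pow_inv[of \<epsilon> "1/2"] \<open>0 < \<epsilon>\<close> by auto
    define F where "F = {t\<in>E. idx t \<le> N}"
    have "idx ` F \<subseteq> {..N}" "inj_on idx F"
      using inj_on_subset[OF inj] unfolding F_def by auto
    then have "finite F"
      using finite_image_iff finite_subset by blast
    moreover have "upper r < \<epsilon>" if "r \<in> E" "\<forall>t\<in>F. r < t" for r
    proof -
      have "idx ` {t\<in>E. t \<le> r} \<subseteq> {N<..}"
        using that(2) unfolding F_def by (auto simp: not_le[symmetric])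
      then show ?thesis
        unfolding upper_def using half_power_sum_le_power N by (meson le_less_trans)
    qed
    ultimately show ?thesis
      unfolding F_def by blast
  qed
  moreover have "0 \<le> lower r" for r
    unfolding lower_def by (rule half_power_sum_nonneg)
  ultimately show thesis
    using that[of lower upper] by blast
qed

text \<open>The sets \<open>{r. r < t}\<close>, \<open>t \<noteq> z\<close>, generate the neighbourhoods of \<open>z\<close>, so this says
  that \<open>\<phi>\<close> is continuous at \<open>z\<close> with value \<open>0\<close>.\<close>
definition tends_to_zero_at_bottom :: "'d::linorder set \<Rightarrow> 'd \<Rightarrow> ('d \<Rightarrow> rat) \<Rightarrow> bool" where
  "tends_to_zero_at_bottom D z \<phi> \<longleftrightarrow>
     (\<forall>s>0. \<exists>F. finite F \<and> F \<subseteq> D - {z} \<and> (\<forall>r\<in>D. (\<forall>t\<in>F. r < t) \<longrightarrow> \<phi> r < s))"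

lemma countable_linorder_embeds_into_rat:
  fixes D :: "'d::linorder set"
  assumes "countable D" and "z \<in> D" and bottom: "\<forall>r\<in>D. z \<le> r"
  obtains \<phi> :: "'d \<Rightarrow> rat"
  where "\<phi> z = 0" "strict_mono_on D \<phi>" "tends_to_zero_at_bottom D z \<phi>"
proof -
  obtain lower upper :: "'d \<Rightarrow> real" where lower_nonneg: "\<forall>r. 0 \<le> lower r"
    and gap: "\<forall>r\<in>D - {z}. lower r < upper r"
    and upper_le_lower: "\<forall>r s. r < s \<longrightarrow> upper r \<le> lower s"
    and small: "\<forall>\<epsilon>>0. \<exists>F. finite F \<and> F \<subseteq> D - {z} \<and> (\<forall>r\<in>D - {z}. (\<forall>t\<in>F. r < t) \<longrightarrow> upper r < \<epsilon>)"
    by (rule countable_linorder_gaps[OF countable_Diff[OF \<open>countable D\<close>]])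
  define \<phi> where "\<phi> r = (if r = z then 0 else SOME q. lower r < of_rat q \<and> of_rat q < upper r)" for r
  have \<phi>_z: "\<phi> z = 0"
    unfolding \<phi>_def by simp
  have \<phi>: "lower r < of_rat (\<phi> r) \<and> of_rat (\<phi> r) < upper r" if "r \<in> D - {z}" for r
    using someI_ex[OF of_rat_dense[OF gap[rule_format, OF that]]] that unfolding \<phi>_def by auto
  have "strict_mono_on D \<phi>"
  proof (rule strict_mono_onI)
    fix r s assume "r \<in> D" "s \<in> D" "r < s"
    then have "s \<in> D - {z}"
      using bottom by force
    have "of_rat (\<phi> r) < (of_rat (\<phi> s) :: real)"
    proof (cases "r = z")
      case True
      have "0 \<le> lower s"
        using lower_nonneg by blast
      also have "lower s < of_rat (\<phi> s)"
        using \<phi>[OF \<open>s \<in> D - {z}\<close>] by blast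
      finally show ?thesis
        using True \<phi>_z by simp
    next
      case False
      then have "of_rat (\<phi> r) < upper r"
        using \<phi> \<open>r \<in> D\<close> by blast
      also have "upper r \<le> lower s"
        using upper_le_lower \<open>r < s\<close> by blast
      also have "lower s < of_rat (\<phi> s)"
        using \<phi>[OF \<open>s \<in> D - {z}\<close>] by blast
      finally show ?thesis .
    qed
    then show "\<phi> r < \<phi> s"
      by (simp only: of_rat_less)
  qed
  moreover have "tends_to_zero_at_bottom D z \<phi>"
    unfolding tends_to_zero_at_bottom_def
  proof (intro allI impI)
    fix s :: rat assume "0 < s"
    then have "(0::real) < of_rat s"
      by simp
    then obtain F where F: "finite F" "F \<subseteq> D - {z}"
      and upper_small: "\<forall>r\<in>D - {z}. (\<forall>t\<in>F. r < t) \<longrightarrow> upper r < of_rat s"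
      using small[rule_format, of "of_rat s"] by blast
    have "\<phi> r < s" if "r \<in> D" "\<forall>t\<in>F. r < t" for r
    proof (cases "r = z")
      case True
      then show ?thesis using \<phi>_z \<open>0 < s\<close> by simp
    next
      case False
      then have "r \<in> D - {z}"
        using that(1) by blast
      then have "of_rat (\<phi> r) < upper r" "upper r < of_rat s"
        using \<phi>[of r] upper_small that(2) by blast+
      then have "of_rat (\<phi> r) < (of_rat s :: real)"
        by (rule less_trans)
      then show ?thesis
        by (simp only: of_rat_less)
    qed
    then show "\<exists>F. finite F \<and> F \<subseteq> D - {z} \<and> (\<forall>r\<in>D. (\<forall>t\<in>F. r < t) \<longrightarrow> \<phi> r < s)"
      using F by blast
  qed
  ultimately show thesis
    using that \<phi>_z by simp
qed

lemma ultrametric2_comp_strict_mono: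
  assumes um: "ultrametric2 X D z d" and mono: "strict_mono_on D \<phi>"
    and "\<phi> ` D \<subseteq> E" and "\<forall>s\<in>E. \<phi> z \<le> s"
  shows "ultrametric2 X E (\<phi> z) (\<lambda>x y. \<phi> (d x y))"
  unfolding ultrametric2_def
proof (intro conjI ballI)
  show "\<phi> z \<in> E"
    using assms(3) ultrametric2_bottom(1)[OF um] by blast
  fix x y assume xy: "x \<in> X" "y \<in> X"
  show "\<phi> (d x y) \<in> E"
    using assms(3) ultrametric2_dist_mem[OF um xy] by blast
  show "\<phi> (d x y) = \<phi> (d y x)"
    using ultrametric2_sym[OF um xy] by simp
  show "\<phi> (d x y) = \<phi> z \<longleftrightarrow> x = y"
    using strict_mono_on_eqD[OF mono] ultrametric2_dist_mem[OF um xy] ultrametric2_bottom(1)[OF um]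
      ultrametric2_eq_zero_iff[OF um xy] by metis
  fix w assume "w \<in> X"
  have "d x w \<le> max (d x y) (d y w)"
    using ultrametric2_triangle[OF um xy \<open>w \<in> X\<close>] .
  then show "\<phi> (d x w) \<le> max (\<phi> (d x y)) (\<phi> (d y w))"
    using strict_mono_on_leD[OF mono] ultrametric2_dist_mem[OF um] xy \<open>w \<in> X\<close>
    by (metis le_max_iff_disj)
qed (use assms(4) in auto)

lemma dc_embeddingI:
  assumes um: "ultrametric2 X D z d" and umY: "ultrametric2 Y E w dY" and "f ` X \<subseteq> Y"
    and mono: "strict_mono_on D \<phi>" and "\<phi> ` D \<subseteq> E" "\<phi> z = w"
    and iso: "\<forall>x\<in>X. \<forall>y\<in>X. dY (f x) (f y) = \<phi> (d x y)"
  shows "dc_embedding X D z d Y E w dY f"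
  unfolding dc_embedding_def
proof (intro conjI exI[of _ \<phi>])
  show "inj_on f X"
  proof (rule inj_onI)
    fix x y assume xy: "x \<in> X" "y \<in> X" and "f x = f y"
    then have "\<phi> (d x y) = \<phi> z"
      using iso ultrametric2_self[OF umY] \<open>f ` X \<subseteq> Y\<close> \<open>\<phi> z = w\<close> by fastforce
    then have "d x y = z"
      using strict_mono_on_eqD[OF mono] ultrametric2_dist_mem[OF um xy] ultrametric2_bottom(1)[OF um]
      by metis
    then show "x = y"
      using ultrametric2_eq_zero_iff[OF um xy] by blast
  qed
  show "\<forall>r\<in>D. \<forall>s\<in>D. r \<le> s \<longleftrightarrow> \<phi> r \<le> \<phi> s"
    using strict_mono_on_less_eq[OF mono] by blast
qed (use assms in auto)

lemma tends_to_zero_at_bottomD: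
  assumes "tends_to_zero_at_bottom D z \<phi>" "0 < s"
  obtains F where "finite F" "F \<subseteq> D - {z}" "\<forall>r\<in>D. (\<forall>t\<in>F. r < t) \<longrightarrow> \<phi> r < s"
  using assms unfolding tends_to_zero_at_bottom_def by (elim allE[of _ s]) auto

lemma unif_cont2_if_dist_comp:
  fixes dY :: "'b \<Rightarrow> 'b \<Rightarrow> rat"
  assumes um: "ultrametric2 X D z d" and small: "tends_to_zero_at_bottom D z \<phi>"
    and iso: "\<forall>x\<in>X. \<forall>y\<in>X. dY (f x) (f y) = \<phi> (d x y)"
  shows "unif_cont2 X D z d Y Qnn 0 dY f"
  unfolding unif_cont2_def
proof (intro allI impI)
  fix G assume G: "finite G \<and> G \<subseteq> Qnn - {0}"
  have "\<forall>s\<in>G. \<exists>F. finite F \<and> F \<subseteq> D - {z} \<and> (\<forall>r\<in>D. (\<forall>t\<in>F. r < t) \<longrightarrow> \<phi> r < s)"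
  proof
    fix s assume "s \<in> G"
    then have "0 < s"
      using G by auto
    then obtain F where "finite F" "F \<subseteq> D - {z}" "\<forall>r\<in>D. (\<forall>t\<in>F. r < t) \<longrightarrow> \<phi> r < s"
      by (rule tends_to_zero_at_bottomD[OF small])
    then show "\<exists>F. finite F \<and> F \<subseteq> D - {z} \<and> (\<forall>r\<in>D. (\<forall>t\<in>F. r < t) \<longrightarrow> \<phi> r < s)"
      by blast
  qed
  then obtain F where F: "\<forall>s\<in>G. finite (F s) \<and> F s \<subseteq> D - {z} \<and> (\<forall>r\<in>D. (\<forall>t\<in>F s. r < t) \<longrightarrow> \<phi> r < s)"
    by (rule bchoice[THEN exE])
  have "dY (f x) (f y) < s"
    if "x \<in> X" "y \<in> X" "\<forall>t\<in>\<Union>(F ` G). d x y < t" "s \<in> G" for x y s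
  proof -
    have "d x y \<in> D" "\<forall>t\<in>F s. d x y < t"
      using ultrametric2_dist_mem[OF um] that by auto
    then have "\<phi> (d x y) < s"
      using F \<open>s \<in> G\<close> by blast
    then show ?thesis
      using iso that(1,2) by simp
  qed
  moreover have "finite (\<Union>(F ` G))" "\<Union>(F ` G) \<subseteq> D - {z}"
    using F G by auto
  ultimately show "\<exists>F. finite F \<and> F \<subseteq> D - {z} \<and>
      (\<forall>x\<in>X. \<forall>y\<in>X. (\<forall>r\<in>F. d x y < r) \<longrightarrow> (\<forall>s\<in>G. dY (f x) (f y) < s))"
    by (intro exI[of _ "\<Union>(F ` G)"]) simp
qed

lemma dense2_approx_comp:
  assumes um: "ultrametric2 X D z d" and "dense2 X D z d C" and "tends_to_zero_at_bottom D z \<phi>"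
  shows "\<forall>x\<in>X. \<forall>s>0. \<exists>c\<in>C. \<phi> (d c x) < s"
proof (intro ballI allI impI)
  fix x and s :: rat assume "x \<in> X" "0 < s"
  obtain F where F: "finite F" "F \<subseteq> D - {z}" "\<forall>r\<in>D. (\<forall>t\<in>F. r < t) \<longrightarrow> \<phi> r < s"
    by (rule tends_to_zero_at_bottomD[OF assms(3) \<open>0 < s\<close>])
  obtain c where c: "c \<in> C" "\<forall>t\<in>F. d c x < t"
    by (rule dense2_meets_balls[OF um assms(2) \<open>x \<in> X\<close> F(1,2)])
  have "C \<subseteq> X"
    using assms(2) unfolding dense2_def by blast
  then have "d c x \<in> D"
    using ultrametric2_dist_mem[OF um _ \<open>x \<in> X\<close>] c(1) by blast
  then show "\<exists>c\<in>C. \<phi> (d c x) < s"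
    using F(3) c by blast
qed

lemma rat_urysohn_ultrametric_extend_point:
  fixes rho :: "'a \<Rightarrow> 'a \<Rightarrow> rat" and p :: "'k \<Rightarrow> 'a" and q :: "'k \<Rightarrow> 'u"
  assumes RU: "rat_urysohn_ultrametric U dU" and um: "ultrametric2 X Qnn 0 rho"
    and "finite K" "p ` K \<subseteq> X" "q ` K \<subseteq> U" "x \<in> X"
    and iso: "\<forall>k\<in>K. \<forall>k'\<in>K. dU (q k) (q k') = rho (p k) (p k')"
  obtains v where "v \<in> U" "\<forall>k\<in>K. dU v (q k) = rho x (p k)"
proof (cases "\<exists>k\<in>K. p k = x")
  case True
  then obtain k where "k \<in> K" "p k = x" by blast
  then show thesis
    using that[of "q k"] iso assms(5) by auto
next
  case False
  have umU: "ultrametric2 U Qnn 0 dU"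
    using RU unfolding rat_urysohn_ultrametric_def by blast
  have pX: "p k \<in> X" and qU: "q k \<in> U" if "k \<in> K" for k
    using that assms(4,5) by auto
  define w where "w a = rho x (p (SOME k. k \<in> K \<and> q k = a))" for a
  have w: "w (q k) = rho x (p k)" if "k \<in> K" for k
  proof -
    define k' where "k' = (SOME k'. k' \<in> K \<and> q k' = q k)"
    have k': "k' \<in> K \<and> q k' = q k"
      unfolding k'_def by (rule someI_ex) (use that in blast)
    have "rho (p k') (p k) = dU (q k') (q k)"
      using iso k' that by metis
    also have "\<dots> = 0"
      using k' ultrametric2_self[OF umU qU[OF that]] by simp
    finally have "p k' = p k"
      using ultrametric2_eq_zero_iff[OF um pX pX] k' that by blast
    then show ?thesis
      unfolding w_def k'_def[symmetric] by simp
  qed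
  have "0 < w a" if "a \<in> q ` K" for a
  proof -
    obtain k where "k \<in> K" "a = q k"
      using \<open>a \<in> q ` K\<close> by blast
    moreover have "rho x (p k) \<in> Qnn" "rho x (p k) \<noteq> 0"
      using False \<open>k \<in> K\<close> ultrametric2_dist_mem[OF um \<open>x \<in> X\<close> pX]
        ultrametric2_eq_zero_iff[OF um \<open>x \<in> X\<close> pX] by auto
    ultimately show ?thesis
      using w by auto
  qed
  moreover have "dU a b \<le> max (w a) (w b) \<and> w a \<le> max (dU a b) (w b)"
    if ab: "a \<in> q ` K" "b \<in> q ` K" for a b
  proof -
    obtain k k' where "k \<in> K" "k' \<in> K" "a = q k" "b = q k'"
      using ab by blast
    then show ?thesis
      using ultrametric2_extension_condition[OF um \<open>x \<in> X\<close> pX pX] iso w by simp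
  qed
  moreover have "finite (q ` K)" "q ` K \<subseteq> U"
    using assms(3,5) by auto
  ultimately have "\<exists>v\<in>U. \<forall>a\<in>q ` K. dU v a = w a"
    using RU unfolding rat_urysohn_ultrametric_def by (elim conjE allE[of _ "q ` K"] allE[of _ w]) blast
  then show thesis
    using that w by auto
qed

lemma rat_urysohn_ultrametric_embeds_sequence:
  fixes rho :: "'a \<Rightarrow> 'a \<Rightarrow> rat" and U :: "'u set" and f :: "nat \<Rightarrow> 'a"
  assumes RU: "rat_urysohn_ultrametric U dU" and um: "ultrametric2 X Qnn 0 rho"
    and "range f \<subseteq> X"
  obtains u where "range u \<subseteq> U" "\<forall>k k'. dU (u k) (u k') = rho (f k) (f k')"
proof -
  have fX: "f n \<in> X" for n
    using \<open>range f \<subseteq> X\<close> by auto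
  have umU: "ultrametric2 U Qnn 0 dU"
    using RU unfolding rat_urysohn_ultrametric_def by blast
  define P where "P u n v \<longleftrightarrow> v \<in> U \<and> (\<forall>k<n. dU v (u k) = rho (f n) (f k))" for u n v
  have pairwise: "dU (u k) (u k') = rho (f k) (f k')"
    if P: "\<And>m. m \<le> max k k' \<Longrightarrow> P u m (u m)" for u k k'
  proof -
    have U: "u k \<in> U" "u k' \<in> U"
      using P[of k] P[of k'] unfolding P_def by auto
    consider "k < k'" | "k = k'" | "k' < k"
      by fastforce
    then show ?thesis
    proof cases
      case 1
      then have "dU (u k') (u k) = rho (f k') (f k)"
        using P[of k'] unfolding P_def by simp
      then show ?thesis
        using ultrametric2_sym[OF umU U] ultrametric2_sym[OF um fX fX] by simp
    next
      case 2
      then show ?thesis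
        using ultrametric2_self[OF umU U(1)] ultrametric2_self[OF um fX] by simp
    next
      case 3
      then show ?thesis
        using P[of k] unfolding P_def by simp
    qed
  qed
  have "\<exists>u. \<forall>n. P u n (u n)"
  proof (rule dependent_wellorder_choice[where P = P])
    fix n u assume earlier: "\<And>m. m < n \<Longrightarrow> P u m (u m)"
    have "\<forall>k\<in>{..<n}. \<forall>k'\<in>{..<n}. dU (u k) (u k') = rho (f k) (f k')"
      using pairwise earlier by (metis lessThan_iff max_less_iff_conj le_less_trans)
    then obtain v where "v \<in> U" "\<forall>k\<in>{..<n}. dU v (u k) = rho (f n) (f k)"
      using rat_urysohn_ultrametric_extend_point[OF RU um, of "{..<n}" f u "f n"] fX earlier
      unfolding P_def by blast
    then show "\<exists>v. P u n v"
      unfolding P_def by auto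
  next
    fix v n and u u' :: "nat \<Rightarrow> 'u"
    assume "\<And>m. m < n \<Longrightarrow> u m = u' m"
    then show "P u n v = P u' n v"
      unfolding P_def by simp
  qed
  then obtain u where u: "\<And>n. P u n (u n)"
    by blast
  then have "range u \<subseteq> U"
    unfolding P_def by auto
  then show thesis
    using that pairwise[OF u] by blast
qed

lemma rat_urysohn_ultrametric_embeds_countable:
  fixes rho :: "'a \<Rightarrow> 'a \<Rightarrow> rat" and U :: "'u set"
  assumes RU: "rat_urysohn_ultrametric U dU" and um: "ultrametric2 C Qnn 0 rho" and "countable C"
  obtains g where "g ` C \<subseteq> U" "\<forall>a\<in>C. \<forall>b\<in>C. dU (g a) (g b) = rho a b"
proof (cases "C = {}")
  case True
  then show thesis using that by simp
next
  case False
  define f where "f = from_nat_into C"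
  have "range f \<subseteq> C"
    unfolding f_def using False by (rule range_from_nat_into_subset)
  then obtain u where "range u \<subseteq> U" and u_iso: "\<forall>k k'. dU (u k) (u k') = rho (f k) (f k')"
    by (rule rat_urysohn_ultrametric_embeds_sequence[OF RU um])
  define g where "g a = u (to_nat_on C a)" for a
  have "g ` C \<subseteq> U"
    using \<open>range u \<subseteq> U\<close> unfolding g_def by auto
  moreover have "\<forall>a\<in>C. \<forall>b\<in>C. dU (g a) (g b) = rho a b"
    using u_iso \<open>countable C\<close> unfolding g_def f_def by simp
  ultimately show thesis
    by (rule that)
qed

text \<open>Any isometric extension of \<open>\<phi>\<close> must send \<open>x\<close> into each of these balls; a common point
  of all of them is therefore the candidate image of \<open>x\<close>.\<close>
definition approx_balls ::
  "'v set \<Rightarrow> ('v \<Rightarrow> 'v \<Rightarrow> 'e::linorder) \<Rightarrow> ('a \<Rightarrow> 'v) \<Rightarrow> 'a set \<Rightarrow> ('a \<Rightarrow> 'a \<Rightarrow> 'e) \<Rightarrow> 'a \<Rightarrow> 'v set set"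
  where "approx_balls V dV \<phi> C rho x = {ball2 V dV (\<phi> c) s | c s. c \<in> C \<and> rho c x < s}"

lemma approx_balls_chain:
  assumes umV: "ultrametric2 V E w dV" and um: "ultrametric2 X E w rho"
    and CX: "C \<subseteq> X" and \<phi>V: "\<phi> ` C \<subseteq> V" and iso: "\<forall>a\<in>C. \<forall>b\<in>C. dV (\<phi> a) (\<phi> b) = rho a b"
    and "x \<in> X" "A \<in> approx_balls V dV \<phi> C rho x" "B \<in> approx_balls V dV \<phi> C rho x"
  shows "A \<subseteq> B \<or> B \<subseteq> A"
proof -
  have nested: "ball2 V dV (\<phi> c) s \<subseteq> ball2 V dV (\<phi> c') s'"
    if c: "c \<in> C" "rho c x < s" and c': "c' \<in> C" "rho c' x < s'" and "s \<le> s'" for c c' s s'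
  proof (rule ultrametric2_ball_subset[OF umV])
    have "rho c c' \<le> max (rho c x) (rho x c')" "rho x c' = rho c' x"
      using ultrametric2_triangle[OF um] ultrametric2_sym[OF um] CX c(1) c'(1) \<open>x \<in> X\<close> by blast+
    then show "dV (\<phi> c) (\<phi> c') < s'"
      using iso c c' \<open>s \<le> s'\<close> by (auto simp: le_max_iff_disj; order)
  qed (use \<phi>V c c' \<open>s \<le> s'\<close> in auto)
  obtain c s c' s' where "A = ball2 V dV (\<phi> c) s" "c \<in> C" "rho c x < s"
    and "B = ball2 V dV (\<phi> c') s'" "c' \<in> C" "rho c' x < s'"
    using assms(7,8) unfolding approx_balls_def by blast
  then show ?thesis
    using nested[of c s c' s'] nested[of c' s' c s] by (meson linear)
qed

lemma cauchy_complete2_limit_point: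
  fixes rho :: "'a \<Rightarrow> 'a \<Rightarrow> rat" and dV :: "'v \<Rightarrow> 'v \<Rightarrow> rat"
  assumes umV: "ultrametric2 V Qnn 0 dV" and complete: "cauchy_complete2 V Qnn 0 dV"
    and um: "ultrametric2 X Qnn 0 rho" and CX: "C \<subseteq> X" and \<phi>V: "\<phi> ` C \<subseteq> V"
    and iso: "\<forall>a\<in>C. \<forall>b\<in>C. dV (\<phi> a) (\<phi> b) = rho a b"
    and approx: "\<forall>s>0. \<exists>c\<in>C. rho c x < s" and "x \<in> X"
  shows "\<exists>v\<in>V. \<forall>c\<in>C. dV v (\<phi> c) \<le> rho c x"
proof -
  let ?\<B> = "approx_balls V dV \<phi> C rho x"
  have "?\<B> \<subseteq> balls2 V Qnn 0 dV"
  proof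
    fix B assume "B \<in> ?\<B>"
    then obtain c s where "B = ball2 V dV (\<phi> c) s" "c \<in> C" "rho c x < s"
      unfolding approx_balls_def by blast
    moreover have "0 \<le> rho c x"
      using ultrametric2_dist_mem[OF um _ \<open>x \<in> X\<close>] CX \<open>c \<in> C\<close> by auto
    ultimately show "B \<in> balls2 V Qnn 0 dV"
      unfolding balls2_def using \<phi>V by fastforce
  qed
  moreover have "\<forall>A\<in>?\<B>. \<forall>B\<in>?\<B>. A \<subseteq> B \<or> B \<subseteq> A"
    using approx_balls_chain[OF umV um CX \<phi>V iso \<open>x \<in> X\<close>] by blast
  moreover have "\<forall>r\<in>Qnn - {0}. \<exists>B\<in>?\<B>. \<exists>a\<in>V. B \<subseteq> ball2 V dV a r"
  proof
    fix r :: rat assume "r \<in> Qnn - {0}"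
    then obtain c where "c \<in> C" "rho c x < r"
      using approx by force
    then show "\<exists>B\<in>?\<B>. \<exists>a\<in>V. B \<subseteq> ball2 V dV a r"
      unfolding approx_balls_def using \<phi>V by blast
  qed
  ultimately have "V \<inter> \<Inter>?\<B> \<noteq> {}"
    using complete[unfolded cauchy_complete2_def, rule_format, of ?\<B>] by blast
  then obtain v where v: "v \<in> V" "v \<in> \<Inter>?\<B>"
    by blast
  have "dV v (\<phi> c) \<le> rho c x" if "c \<in> C" for c
  proof (rule dense_ge)
    fix s assume "rho c x < s"
    then have "ball2 V dV (\<phi> c) s \<in> ?\<B>"
      using that unfolding approx_balls_def by blast
    then show "dV v (\<phi> c) \<le> s"
      using v unfolding ball2_def by auto
  qed
  then show ?thesis
    using v by blast
qed

lemma isometry_extends_to_cauchy_complete2: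
  fixes rho :: "'a \<Rightarrow> 'a \<Rightarrow> rat" and dV :: "'v \<Rightarrow> 'v \<Rightarrow> rat"
  assumes umV: "ultrametric2 V Qnn 0 dV" and complete: "cauchy_complete2 V Qnn 0 dV"
    and um: "ultrametric2 X Qnn 0 rho" and CX: "C \<subseteq> X" and \<phi>V: "\<phi> ` C \<subseteq> V"
    and iso: "\<forall>a\<in>C. \<forall>b\<in>C. dV (\<phi> a) (\<phi> b) = rho a b"
    and dense: "\<forall>x\<in>X. \<forall>s>0. \<exists>c\<in>C. rho c x < s"
  obtains e where "e ` X \<subseteq> V" "\<forall>x\<in>X. \<forall>y\<in>X. dV (e x) (e y) = rho x y"
proof -
  have "\<forall>x\<in>X. \<exists>v. v \<in> V \<and> (\<forall>c\<in>C. dV v (\<phi> c) \<le> rho c x)"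
    using cauchy_complete2_limit_point[OF umV complete um CX \<phi>V iso] dense by blast
  then obtain e where "\<forall>x\<in>X. e x \<in> V \<and> (\<forall>c\<in>C. dV (e x) (\<phi> c) \<le> rho c x)"
    by (rule bchoice[THEN exE])
  then have eV: "\<And>x. x \<in> X \<Longrightarrow> e x \<in> V"
    and near: "\<And>x c. x \<in> X \<Longrightarrow> c \<in> C \<Longrightarrow> dV (e x) (\<phi> c) \<le> rho c x"
    by blast+
  have "dV (e x) (e y) = rho x y" if xy: "x \<in> X" "y \<in> X" for x y
  proof (cases "x = y")
    case True
    then show ?thesis
      using ultrametric2_self[OF umV eV] ultrametric2_self[OF um] xy by simp
  next
    case False
    then have "0 < rho x y"
      using ultrametric2_dist_mem[OF um xy] ultrametric2_eq_zero_iff[OF um xy] by auto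
    then obtain c c' where c: "c \<in> C" "rho c x < rho x y" and c': "c' \<in> C" "rho c' y < rho x y"
      using dense xy by meson
    have "rho x c = rho c x" "rho y c' = rho c' y"
      using ultrametric2_sym[OF um] xy c(1) c'(1) CX by blast+
    then have "rho c c' = rho x y"
      using ultrametric2_dist_eq_of_close[OF um xy, of c c'] c c' CX by auto
    moreover have "\<phi> c \<in> V" "\<phi> c' \<in> V"
      using \<phi>V c c' by auto
    moreover have "dV (\<phi> c) (e x) < rho x y" "dV (\<phi> c') (e y) < rho x y"
      using near[OF xy(1) c(1)] near[OF xy(2) c'(1)] c c' \<open>\<phi> c \<in> V\<close> \<open>\<phi> c' \<in> V\<close>
        ultrametric2_sym[OF umV _ eV] xy by (metis le_less_trans)+
    ultimately show ?thesis
      using ultrametric2_dist_eq_of_close[OF umV, of "\<phi> c" "\<phi> c'" "e x" "e y"] iso c c' eV xy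
      by auto
  qed
  then show thesis
    using that eV by blast
qed

lemma urysohn_completion_embeds_separable:
  fixes rho :: "'a \<Rightarrow> 'a \<Rightarrow> rat"
  assumes UV: "urysohn_completion V dV U dU i" and um: "ultrametric2 X Qnn 0 rho"
    and "countable C" "C \<subseteq> X" and dense: "\<forall>x\<in>X. \<forall>s>0. \<exists>c\<in>C. rho c x < s"
  obtains e where "e ` X \<subseteq> V" "\<forall>x\<in>X. \<forall>y\<in>X. dV (e x) (e y) = rho x y"
proof -
  have RU: "rat_urysohn_ultrametric U dU" and umV: "ultrametric2 V Qnn 0 dV"
    and complete: "cauchy_complete2 V Qnn 0 dV" and "i ` U \<subseteq> V"
    and i_iso: "\<forall>x\<in>U. \<forall>y\<in>U. dV (i x) (i y) = dU x y"
    using UV unfolding urysohn_completion_def by blast+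
  obtain g where "g ` C \<subseteq> U" and g_iso: "\<forall>a\<in>C. \<forall>b\<in>C. dU (g a) (g b) = rho a b"
    using rat_urysohn_ultrametric_embeds_countable[OF RU ultrametric2_subset[OF um \<open>C \<subseteq> X\<close>] \<open>countable C\<close>]
    by blast
  then have "(i \<circ> g) ` C \<subseteq> V" "\<forall>a\<in>C. \<forall>b\<in>C. dV ((i \<circ> g) a) ((i \<circ> g) b) = rho a b"
    using \<open>i ` U \<subseteq> V\<close> i_iso by (auto simp: image_subset_iff)
  then show thesis
    using isometry_extends_to_cauchy_complete2[OF umV complete um \<open>C \<subseteq> X\<close> _ _ dense] that
    by blast
qed

theorem corollary3p22:
  fixes X :: "'a set" and D :: "'d::linorder set" and z :: 'd and d :: "'a \<Rightarrow> 'a \<Rightarrow> 'd"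
    and U :: "'u set" and dU :: "'u \<Rightarrow> 'u \<Rightarrow> rat"
    and V :: "'v set" and dV :: "'v \<Rightarrow> 'v \<Rightarrow> rat" and i :: "'u \<Rightarrow> 'v"
  assumes "ultrametric2 X D z d" and "precise2 X D d" and "separable2 X D z d"
    and "urysohn_completion V dV U dU i"
  shows "\<exists>e. dc_embedding X D z d V Qnn 0 dV e \<and> unif_cont2 X D z d V Qnn 0 dV e"
proof -
  note um = assms(1)
  have "z \<in> D" and bottom: "\<forall>r\<in>D. z \<le> r"
    using ultrametric2_bottom[OF um] by blast+
  obtain C where "countable C" and dense: "dense2 X D z d C"
    using assms(3) unfolding separable2_def by blast
  have "countable D"
    by (rule precise2_countable_dist_set[OF um assms(2) dense \<open>countable C\<close>])
  have "C \<subseteq> X"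
    using dense unfolding dense2_def by blast
  obtain \<phi> :: "'d \<Rightarrow> rat"
    where "\<phi> z = 0" and mono: "strict_mono_on D \<phi>" and small: "tends_to_zero_at_bottom D z \<phi>"
    by (rule countable_linorder_embeds_into_rat[OF \<open>countable D\<close> \<open>z \<in> D\<close> bottom])
  have "\<phi> ` D \<subseteq> Qnn"
    using strict_mono_on_leD[OF mono \<open>z \<in> D\<close>] bottom \<open>\<phi> z = 0\<close> by auto
  then have "ultrametric2 X Qnn 0 (\<lambda>x y. \<phi> (d x y))"
    using ultrametric2_comp_strict_mono[OF um mono] \<open>\<phi> z = 0\<close> by simp
  then obtain e where "e ` X \<subseteq> V" and iso: "\<forall>x\<in>X. \<forall>y\<in>X. dV (e x) (e y) = \<phi> (d x y)"
    by (rule urysohn_completion_embeds_separable[OF assms(4) _ \<open>countable C\<close> \<open>C \<subseteq> X\<close>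
          dense2_approx_comp[OF um dense small]])
  moreover have "ultrametric2 V Qnn 0 dV"
    using assms(4) unfolding urysohn_completion_def by blast
  ultimately have "dc_embedding X D z d V Qnn 0 dV e"
    using um mono \<open>\<phi> ` D \<subseteq> Qnn\<close> \<open>\<phi> z = 0\<close> iso by (intro dc_embeddingI)
  moreover have "unif_cont2 X D z d V Qnn 0 dV e"
    using um small iso by (rule unif_cont2_if_dist_comp)
  ultimately show ?thesis
    by blast
qed

end
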